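(* Let $\mathcal{F}_{Q,2}=\{a/q: 0<a\le q\le Q,\ \gcd(a,q)=1,\ q\text{ square-free}\}$. Then, as $Q\to\infty$, \[\#\mathcal{F}_{Q,2}=\frac{3Q^2}{\pi^2}\prod_{p}\left(1-\frac{1}{p(p+1)}\right)+O\!\left(Q^{3/2}\right),\] the product being over all primes $p$.
   Context: A positive integer is square-free if it is not divisible by the square of any prime. *)

theory Defs
  imports "HOL-Analysis.Analysis" "HOL-Computational_Algebra.Squarefree" "HOL-Library.Landau_Symbols"
begin

definition farey_sqfree :: "nat \<Rightarrow> rat set" where
  "farey_sqfree Q = {of_nat a / of_nat q | a q. 0 < a \<and> a \<le> q \<and> q \<le> Q \<and> coprime a q \<and> squarefree q}"

definition sqfree_farey_const :: real where
  "sqfree_farey_const = (\<Prod>p. if prime p then 1 - 1 / (real p * (real p + 1)) else 1)"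

end

theory Submission
  imports Defs "HOL-Number_Theory.Totient" "HOL-Real_Asymp.Real_Asymp"
begin

text \<open>
  For squarefree \<open>n\<close>, \<open>\<phi>(n)/n = \<Prod>\<^sub>p\<^sub>|\<^sub>n (1 - 1/p)\<close>, and the indicator of squarefreeness kills
  the primes with \<open>p\<^sup>2 | n\<close>. Expanding the resulting local factors gives
  \<open>[n squarefree] \<phi>(n) = n \<Sum> h(a, b)\<close>, summed over coprime squarefree \<open>a, b\<close> with \<open>a b\<^sup>2 | n\<close>, where
  \<open>h(a, b) = \<Prod>\<^sub>p\<^sub>|\<^sub>a (-1/p) \<Prod>\<^sub>p\<^sub>|\<^sub>b (-(1 - 1/p))\<close> and \<open>|h(a, b)| \<le> 1/a\<close>.
  Counting the fractions with denominator \<open>q \<le> Q\<close> and summing \<open>n\<close> over the multiples of \<open>a b\<^sup>2\<close> gives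
  \<open>(Q\<^sup>2/2) \<Sum>\<^bsub>a b\<^sup>2 \<le> Q\<^esub> h(a, b)/(a b\<^sup>2)\<close> with an error \<open>O(Q \<Sum>\<^bsub>a b\<^sup>2 \<le> Q\<^esub> 1/a) = O(Q\<^sup>3\<^sup>/\<^sup>2)\<close>;
  the tail of the series beyond \<open>a b\<^sup>2 > Q\<close> is \<open>O(Q\<^sup>-\<^sup>1\<^sup>/\<^sup>2)\<close>. The complete series is an Euler
  product with factors \<open>(1 - 1/p\<^sup>2)(1 - 1/(p(p + 1)))\<close>, and \<open>\<Prod>\<^sub>p (1 - 1/p\<^sup>2) = 6/\<pi>\<^sup>2\<close> follows from
  \<open>\<Sum> 1/n\<^sup>2 = \<pi>\<^sup>2/6\<close> by sieving out the small primes.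
\<close>

section \<open>Squarefree numbers and their prime factors\<close>

lemma squarefree_pos_nat: "squarefree (n :: nat) \<Longrightarrow> 0 < n"
  by (metis not_squarefree_0 gr0I)

lemma prime_factors_prod_primes:
  fixes A :: "nat set"
  assumes "finite A" "\<forall>p\<in>A. prime p"
  shows "prime_factors (\<Prod>A) = A"
proof -
  have "0 \<notin> id ` A"
    using assms(2) by (auto dest: prime_gt_0_nat)
  then have "prime_factors (prod id A) = \<Union>((prime_factors \<circ> id) ` A)"
    using prime_factors_prod[OF assms(1)] by blast
  also have "\<dots> = A"
    using assms(2) by (auto simp: prime_prime_factors)
  finally show ?thesis by simp
qed

lemma squarefree_prod_primes:
  fixes A :: "nat set"
  assumes "\<forall>p\<in>A. prime p"
  shows "squarefree (\<Prod>A)"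
  unfolding id_def[symmetric]
  using assms by (intro squarefree_prod_coprime) (auto simp: primes_coprime squarefree_prime)

lemma prod_prime_factors_squarefree:
  fixes n :: nat
  assumes "squarefree n"
  shows "\<Prod>(prime_factors n) = n"
proof -
  have n0: "n \<noteq> 0"
    using squarefree_pos_nat[OF assms] by simp
  have "n = (\<Prod>p\<in>prime_factors n. p ^ multiplicity p n)"
    using n0 by (simp add: prime_factorization_nat)
  also have "\<dots> = (\<Prod>p\<in>prime_factors n. p)"
    using assms n0 by (intro prod.cong) (auto simp: squarefree_factorial_semiring')
  finally show ?thesis by simp
qed

lemma squarefree_dvd_iff_prime_factors_subset:
  fixes a m :: nat
  assumes "squarefree a" "m \<noteq> 0"
  shows "a dvd m \<longleftrightarrow> prime_factors a \<subseteq> prime_factors m"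
proof
  assume "a dvd m"
  then show "prime_factors a \<subseteq> prime_factors m"
    using assms by (simp add: dvd_prime_factors)
next
  assume sub: "prime_factors a \<subseteq> prime_factors m"
  have a0: "a \<noteq> 0"
    using squarefree_pos_nat[OF assms(1)] by simp
  show "a dvd m"
  proof (subst prime_multiplicity_le_imp_dvd[OF a0 assms(2)], intro allI impI)
    fix p :: nat
    assume p: "prime p"
    show "multiplicity p a \<le> multiplicity p m"
    proof (cases "p \<in> prime_factors a")
      case True
      then have "multiplicity p a = 1"
        using assms(1) a0 by (auto simp: squarefree_factorial_semiring')
      moreover have "multiplicity p m > 0"
        using True sub p assms(2) by (auto simp: prime_factors_multiplicity)
      ultimately show ?thesis by simp
    next
      case False
      then show ?thesis
        using p a0 by (auto simp: prime_factors_multiplicity)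
    qed
  qed
qed

lemma coprime_iff_prime_factors_disjoint:
  fixes a b :: nat
  assumes "a \<noteq> 0" "b \<noteq> 0"
  shows "coprime a b \<longleftrightarrow> prime_factors a \<inter> prime_factors b = {}"
  using assms
  by (simp add: coprime_iff_gcd_eq_1 prime_factors_gcd[symmetric] prime_factorization_empty_iff
      del: prime_factors_gcd)

lemma squarefree_mult_square_dvd_iff:
  fixes a b n :: nat
  assumes "squarefree a" "squarefree b" "coprime a b" "n \<noteq> 0"
  shows "a * b^2 dvd n \<longleftrightarrow> prime_factors a \<subseteq> prime_factors n \<and> (\<forall>p\<in>prime_factors b. p^2 dvd n)"
proof
  assume "a * b^2 dvd n"
  then have "a dvd n" "b^2 dvd n"
    by (auto intro: dvd_mult_left dvd_mult_right)
  then show "prime_factors a \<subseteq> prime_factors n \<and> (\<forall>p\<in>prime_factors b. p^2 dvd n)"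
    using assms by (auto simp: dvd_prime_factors in_prime_factors_iff intro: dvd_trans[OF dvd_power_same])
next
  assume h: "prime_factors a \<subseteq> prime_factors n \<and> (\<forall>p\<in>prime_factors b. p^2 dvd n)"
  then have "a dvd n"
    using squarefree_dvd_iff_prime_factors_subset assms by blast
  have "prime_factors b \<subseteq> prime_factors (square_part n)"
    using h assms(4) by (auto simp: in_prime_factors_iff dvd_square_part_iff)
  moreover have "square_part n \<noteq> 0"
    using assms(4) by simp
  ultimately have "b dvd square_part n"
    using squarefree_dvd_iff_prime_factors_subset[OF assms(2)] by blast
  then have "b^2 dvd n"
    by (simp add: dvd_square_part_iff)
  with \<open>a dvd n\<close> show "a * b^2 dvd n"
    using assms(3) by (simp add: divides_mult)
qed

section \<open>The squarefree totient function as a sum over pairs\<close>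

definition sqfree_coprime_pairs :: "(nat \<times> nat) set" where
  "sqfree_coprime_pairs = {(a, b). squarefree a \<and> squarefree b \<and> coprime a b}"

text \<open>At a prime \<open>p\<close> the function \<open>n \<mapsto> [n squarefree] \<phi>(n)/n\<close> is \<open>1 - 1/p\<close> if \<open>p\<close> divides \<open>n\<close>
  exactly once and \<open>0\<close> if \<open>p\<^sup>2\<close> divides \<open>n\<close>. The pairs \<open>(a, b)\<close> with \<open>a b\<^sup>2\<close> dividing \<open>n\<close> produce
  these values as \<open>1 + (-1/p)\<close> and \<open>1 + (-1/p) + (-(1 - 1/p))\<close>.\<close>
definition pair_weight :: "nat \<Rightarrow> nat \<Rightarrow> real" where
  "pair_weight a b = (\<Prod>p\<in>prime_factors a. - 1 / real p) * (\<Prod>p\<in>prime_factors b. - (1 - 1 / real p))"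

lemma prod_primes_mem_sqfree_coprime_pairs:
  fixes A B :: "nat set"
  assumes "finite A" "finite B" "\<forall>p\<in>A \<union> B. prime p" "A \<inter> B = {}"
  shows "(\<Prod>A, \<Prod>B) \<in> sqfree_coprime_pairs"
proof -
  have sq: "squarefree (\<Prod>A)" "squarefree (\<Prod>B)"
    using assms(3) by (simp_all add: squarefree_prod_primes)
  moreover have "prime_factors (\<Prod>A) \<inter> prime_factors (\<Prod>B) = {}"
    using assms by (simp add: prime_factors_prod_primes)
  then have "coprime (\<Prod>A) (\<Prod>B)"
    using coprime_iff_prime_factors_disjoint squarefree_pos_nat[OF sq(1)] squarefree_pos_nat[OF sq(2)]
    by simp
  ultimately show ?thesis
    by (simp add: sqfree_coprime_pairs_def)
qed

lemma prime_factors_disjoint_if_sqfree_coprime_pairs: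
  assumes "(a, b) \<in> sqfree_coprime_pairs"
  shows "prime_factors a \<inter> prime_factors b = {}"
proof -
  have "squarefree a" "squarefree b" "coprime a b"
    using assms by (simp_all add: sqfree_coprime_pairs_def)
  then show ?thesis
    using coprime_iff_prime_factors_disjoint[of a b] squarefree_pos_nat by simp
qed

lemma bij_betw_prime_sets_sqfree_coprime_pairs:
  fixes P P2 :: "nat set"
  assumes "finite P" "\<forall>p\<in>P. prime p" "P2 \<subseteq> P"
  shows "bij_betw (\<lambda>(B, A). (\<Prod>A, \<Prod>B)) (SIGMA B:Pow P2. Pow (P - B))
           {(a, b)\<in>sqfree_coprime_pairs. prime_factors a \<subseteq> P \<and> prime_factors b \<subseteq> P2}"
proof (rule bij_betw_byWitness[where f' = "\<lambda>(a, b). (prime_factors b, prime_factors a)"])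
  have fin: "finite X" "\<forall>p\<in>X. prime p" if "X \<subseteq> P" for X
    using that assms finite_subset by auto
  show "\<forall>x\<in>SIGMA B:Pow P2. Pow (P - B).
          (case case x of (B, A) \<Rightarrow> (\<Prod>A, \<Prod>B) of (a, b) \<Rightarrow> (prime_factors b, prime_factors a)) = x"
  proof
    fix x
    assume "x \<in> (SIGMA B:Pow P2. Pow (P - B))"
    then obtain B A where "x = (B, A)" "B \<subseteq> P" "A \<subseteq> P"
      using assms(3) by blast
    then show "(case case x of (B, A) \<Rightarrow> (\<Prod>A, \<Prod>B) of (a, b) \<Rightarrow> (prime_factors b, prime_factors a)) = x"
      using fin prime_factors_prod_primes by auto
  qed
  show "\<forall>y\<in>{(a, b)\<in>sqfree_coprime_pairs. prime_factors a \<subseteq> P \<and> prime_factors b \<subseteq> P2}.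
          (case case y of (a, b) \<Rightarrow> (prime_factors b, prime_factors a) of (B, A) \<Rightarrow> (\<Prod>A, \<Prod>B)) = y"
    by (auto simp: sqfree_coprime_pairs_def prod_prime_factors_squarefree)
  show "(\<lambda>(B, A). (\<Prod>A, \<Prod>B)) ` (SIGMA B:Pow P2. Pow (P - B))
        \<subseteq> {(a, b)\<in>sqfree_coprime_pairs. prime_factors a \<subseteq> P \<and> prime_factors b \<subseteq> P2}"
  proof clarify
    fix B A
    assume "B \<subseteq> P2" "A \<subseteq> P - B"
    then have sub: "A \<subseteq> P" "B \<subseteq> P2" and "A \<inter> B = {}"
      using assms by auto
    moreover have "finite A" "finite B" "\<forall>p\<in>A \<union> B. prime p"
      using sub assms(3) fin[of A] fin[of B] fin(2)[of "A \<union> B"] by auto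
    ultimately show "(\<Prod>A, \<Prod>B) \<in> sqfree_coprime_pairs
        \<and> prime_factors (\<Prod>A) \<subseteq> P \<and> prime_factors (\<Prod>B) \<subseteq> P2"
      using prime_factors_prod_primes prod_primes_mem_sqfree_coprime_pairs[of A B] by auto
  qed
  show "(\<lambda>(a, b). (prime_factors b, prime_factors a)) `
          {(a, b)\<in>sqfree_coprime_pairs. prime_factors a \<subseteq> P \<and> prime_factors b \<subseteq> P2}
        \<subseteq> (SIGMA B:Pow P2. Pow (P - B))"
  proof clarify
    fix a b
    assume "(a, b) \<in> sqfree_coprime_pairs" "prime_factors a \<subseteq> P" "prime_factors b \<subseteq> P2"
    then show "prime_factors b \<in> Pow P2 \<and> prime_factors a \<in> Pow (P - prime_factors b)"
      using prime_factors_disjoint_if_sqfree_coprime_pairs[of a b] by auto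
  qed
qed

lemma sum_sqfree_coprime_pairs_eq_sum_prime_sets:
  fixes P P2 :: "nat set" and G :: "nat \<Rightarrow> nat \<Rightarrow> real"
  assumes "finite P" "\<forall>p\<in>P. prime p" "P2 \<subseteq> P"
  shows "(\<Sum>(a, b)\<in>{(a, b)\<in>sqfree_coprime_pairs. prime_factors a \<subseteq> P \<and> prime_factors b \<subseteq> P2}. G a b)
       = (\<Sum>B\<in>Pow P2. \<Sum>A\<in>Pow (P - B). G (\<Prod>A) (\<Prod>B))"
proof -
  have "(\<Sum>(a, b)\<in>{(a, b)\<in>sqfree_coprime_pairs. prime_factors a \<subseteq> P \<and> prime_factors b \<subseteq> P2}. G a b)
      = (\<Sum>(B, A)\<in>(SIGMA B:Pow P2. Pow (P - B)). G (\<Prod>A) (\<Prod>B))"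
    by (subst sum.reindex_bij_betw[symmetric, OF bij_betw_prime_sets_sqfree_coprime_pairs[OF assms]])
       (simp add: case_prod_unfold)
  also have "\<dots> = (\<Sum>B\<in>Pow P2. \<Sum>A\<in>Pow (P - B). G (\<Prod>A) (\<Prod>B))"
    using assms finite_subset by (subst sum.Sigma) auto
  finally show ?thesis .
qed

lemma sum_disjoint_subsets_prod:
  fixes P P2 :: "'a set" and f g :: "'a \<Rightarrow> 'b :: comm_ring_1"
  assumes "finite P" "P2 \<subseteq> P"
  shows "(\<Sum>B\<in>Pow P2. \<Sum>A\<in>Pow (P - B). prod f A * prod g B)
       = (\<Prod>p\<in>P. 1 + f p + (if p \<in> P2 then g p else 0))"
proof -
  let ?g = "\<lambda>p. if p \<in> P2 then g p else 0"
  have inner: "(\<Prod>p\<in>P - B. 1 + f p) = (\<Sum>A\<in>Pow (P - B). prod f A)" for B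
    using prod_add[of "P - B" f "\<lambda>_. 1"] assms(1) by (simp add: add.commute)
  have "(\<Prod>p\<in>P. 1 + f p + ?g p) = (\<Prod>p\<in>P. ?g p + (1 + f p))"
    by (simp add: algebra_simps)
  also have "\<dots> = (\<Sum>B\<in>Pow P. prod ?g B * (\<Prod>p\<in>P - B. 1 + f p))"
    by (rule prod_add[OF assms(1)])
  also have "\<dots> = (\<Sum>B\<in>Pow P2. prod ?g B * (\<Prod>p\<in>P - B. 1 + f p))"
  proof (rule sum.mono_neutral_right)
    show "\<forall>B\<in>Pow P - Pow P2. prod ?g B * (\<Prod>p\<in>P - B. 1 + f p) = 0"
    proof
      fix B
      assume "B \<in> Pow P - Pow P2"
      then obtain q where "q \<in> B" "q \<notin> P2" "B \<subseteq> P"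
        by auto
      then have "prod ?g B = 0"
        using assms finite_subset[of B P] by (intro prod_zero) auto
      then show "prod ?g B * (\<Prod>p\<in>P - B. 1 + f p) = 0"
        by simp
    qed
  qed (use assms in auto)
  also have "\<dots> = (\<Sum>B\<in>Pow P2. prod g B * (\<Sum>A\<in>Pow (P - B). prod f A))"
    by (intro sum.cong refl arg_cong2[where f = "(*)"] prod.cong) (auto simp: inner)
  also have "\<dots> = (\<Sum>B\<in>Pow P2. \<Sum>A\<in>Pow (P - B). prod f A * prod g B)"
    by (simp add: sum_distrib_left mult.commute)
  finally show ?thesis by simp
qed

lemma pair_weight_prod_primes:
  fixes A B :: "nat set"
  assumes "finite A" "finite B" "\<forall>p\<in>A. prime p" "\<forall>p\<in>B. prime p"
  shows "pair_weight (\<Prod>A) (\<Prod>B) = (\<Prod>p\<in>A. - 1 / real p) * (\<Prod>p\<in>B. - (1 - 1 / real p))"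
  using assms by (simp add: pair_weight_def prime_factors_prod_primes)

lemma mult_square_dvd_sqfree_coprime_pairs:
  fixes n :: nat
  assumes "n > 0"
  shows "{(a, b)\<in>sqfree_coprime_pairs. a * b^2 dvd n}
       = {(a, b)\<in>sqfree_coprime_pairs. prime_factors a \<subseteq> prime_factors n
            \<and> prime_factors b \<subseteq> {p\<in>prime_factors n. p^2 dvd n}}"
proof -
  have "p \<in> prime_factors n" if "prime p" "p^2 dvd n" for p
    using that assms by (auto simp: in_prime_factors_iff intro: dvd_trans[OF dvd_power[of 2 p]])
  then show ?thesis
    using assms
    by (auto simp: sqfree_coprime_pairs_def squarefree_mult_square_dvd_iff in_prime_factors_iff
)
qed

lemma sum_pair_weight_mult_square_dvd:
  fixes n :: nat
  assumes "n > 0"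
  shows "(\<Sum>(a, b)\<in>{(a, b)\<in>sqfree_coprime_pairs. a * b^2 dvd n}. pair_weight a b)
       = (\<Prod>p\<in>prime_factors n. 1 - 1 / real p + (if p^2 dvd n then - (1 - 1 / real p) else 0))"
proof -
  define P where "P = prime_factors n"
  define P2 where "P2 = {p\<in>P. p^2 dvd n}"
  have P: "finite P" "\<forall>p\<in>P. prime p" "P2 \<subseteq> P"
    by (auto simp: P_def P2_def)
  have fin: "finite X" "\<forall>p\<in>X. prime p" if "X \<subseteq> P" for X
    using that P finite_subset by auto
  have "(\<Sum>(a, b)\<in>{(a, b)\<in>sqfree_coprime_pairs. a * b^2 dvd n}. pair_weight a b)
      = (\<Sum>B\<in>Pow P2. \<Sum>A\<in>Pow (P - B). pair_weight (\<Prod>A) (\<Prod>B))"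
    unfolding mult_square_dvd_sqfree_coprime_pairs[OF assms]
    using sum_sqfree_coprime_pairs_eq_sum_prime_sets[OF P] by (simp add: P_def P2_def)
  also have "\<dots> = (\<Sum>B\<in>Pow P2. \<Sum>A\<in>Pow (P - B).
                    (\<Prod>p\<in>A. - 1 / real p) * (\<Prod>p\<in>B. - (1 - 1 / real p)))"
    using P by (intro sum.cong refl pair_weight_prod_primes) (auto intro: finite_subset[OF _ P(1)])
  also have "\<dots> = (\<Prod>p\<in>P. 1 + - 1 / real p + (if p \<in> P2 then - (1 - 1 / real p) else 0))"
    by (rule sum_disjoint_subsets_prod) (use P in auto)
  finally show ?thesis
    by (simp add: P_def P2_def)
qed

lemma squarefree_totient_eq_sum_pair_weight:
  fixes n :: nat
  assumes "n > 0"
  shows "(if squarefree n then real (totient n) else 0)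
         = real n * (\<Sum>(a, b)\<in>{(a, b)\<in>sqfree_coprime_pairs. a * b^2 dvd n}. pair_weight a b)"
proof (cases "squarefree n")
  case True
  have "\<not> p^2 dvd n" if "prime p" for p
    using True that squarefreeD[of n p] by auto
  then have "(\<Prod>p\<in>prime_factors n. 1 - 1 / real p + (if p^2 dvd n then - (1 - 1 / real p) else 0))
      = (\<Prod>p\<in>prime_factors n. 1 - 1 / real p)"
    by (intro prod.cong) (auto dest: in_prime_factors_imp_prime)
  then show ?thesis
    using True assms by (simp add: sum_pair_weight_mult_square_dvd totient_formula2)
next
  case False
  then obtain x where x: "x^2 dvd n" "\<not> x dvd 1"
    by (metis squarefreeI)
  then have "x \<noteq> 1"
    by auto
  then obtain q where q: "prime q" "q dvd x"
    using prime_factor_nat by blast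
  then have q2: "q^2 dvd n"
    using x by (meson dvd_power_same dvd_trans)
  then have "q \<in> prime_factors n"
    using q(1) assms dvd_trans[OF _ q2, of q] by (simp add: in_prime_factors_iff)
  with q2 have "(\<Prod>p\<in>prime_factors n. 1 - 1 / real p + (if p^2 dvd n then - (1 - 1 / real p) else 0)) = 0"
    by (intro prod_zero) (auto intro!: bexI[of _ q])
  then show ?thesis
    using False assms by (simp add: sum_pair_weight_mult_square_dvd)
qed

section \<open>Elementary estimates for sums over pairs\<close>

lemma inverse_three_halves_le_diff:
  fixes x :: real
  assumes "x \<ge> 1"
  shows "1 / ((x + 1) * sqrt (x + 1)) \<le> 2 / sqrt x - 2 / sqrt (x + 1)"
proof -
  define s where "s = sqrt x"
  define t where "t = sqrt (x + 1)"
  have s0: "s > 0" and st: "s \<le> t" and t0: "t > 0"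
    using assms by (auto simp: s_def t_def)
  have "t * (t + s) * (t - s) = t"
    using assms by (simp add: s_def t_def algebra_simps)
  moreover have "2 * t^2 * (t - s) - t * (t + s) * (t - s) = t * (t - s)^2"
    by (simp add: algebra_simps power2_eq_square)
  moreover have "t * (t - s)^2 \<ge> 0"
    using t0 by simp
  ultimately have "2 * t^2 * (t - s) - s \<ge> 0"
    using st by linarith
  then have "0 \<le> (2 * t^2 * (t - s) - s) / (s * t^3)"
    using s0 t0 by simp
  also have "\<dots> = 2 / s - 2 / t - 1 / (t^2 * t)"
    using s0 t0 by (simp add: field_simps power2_eq_square power3_eq_cube)
  finally show ?thesis
    using assms by (simp add: s_def t_def)
qed

lemma sum_inverse_three_halves_le: "(\<Sum>a\<in>{1..n}. 1 / (real a * sqrt (real a))) \<le> 3"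
proof -
  have bound: "(\<Sum>a\<in>{1..n}. 1 / (real a * sqrt (real a))) \<le> 3 - 2 / sqrt (real n)" if "n \<ge> 1" for n
    using that
  proof (induction n rule: nat_induct_at_least)
    case (Suc n)
    have "(\<Sum>a\<in>{1..Suc n}. 1 / (real a * sqrt (real a)))
        = (\<Sum>a\<in>{1..n}. 1 / (real a * sqrt (real a))) + 1 / ((real n + 1) * sqrt (real n + 1))"
      by (simp add: add.commute)
    also have "\<dots> \<le> 3 - 2 / sqrt (real n) + (2 / sqrt (real n) - 2 / sqrt (real n + 1))"
      using Suc inverse_three_halves_le_diff[of "real n"] by (intro add_mono) auto
    finally show ?case
      by (simp add: add.commute)
  qed simp
  show ?thesis
  proof (cases "n \<ge> 1")
    case True
    have "0 \<le> 2 / sqrt (real n)"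
      by simp
    with bound[OF True] show ?thesis
      by linarith
  qed simp
qed

lemma sum_inverse_squares_greaterThan_le:
  assumes "m \<ge> 1"
  shows "(\<Sum>b\<in>{m<..N}. 1 / (real b)^2) \<le> 1 / real m"
proof -
  have "(\<Sum>b\<in>{m<..N}. 1 / (real b)^2) \<le> 1 / real m - 1 / real N" if "N \<ge> m" for N
    using that
  proof (induction N rule: nat_induct_at_least)
    case (Suc N)
    have N1: "real N \<ge> 1"
      using Suc assms by simp
    have "1 / (real N + 1)^2 \<le> 1 / (real N * (real N + 1))"
      using N1 by (intro divide_left_mono) (auto simp: power2_eq_square intro: mult_right_mono)
    also have "\<dots> = 1 / real N - 1 / (real N + 1)"
      using N1 by (simp add: field_simps)
    finally have "1 / (real N + 1)^2 \<le> 1 / real N - 1 / (real N + 1)" .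
    moreover have "{m<..Suc N} = insert (Suc N) {m<..N}"
      using Suc by auto
    ultimately show ?case
      using Suc.IH by (simp add: add.commute)
  qed simp
  then show ?thesis
    by (cases "N \<ge> m") (fastforce intro: order_trans, simp)
qed

lemma sum_inverse_squares_gt_le:
  fixes x :: real
  assumes "x > 0"
  shows "(\<Sum>b\<in>{b\<in>{1..N}. x < real b}. 1 / (real b)^2) \<le> 2 / x"
proof (cases "x < 1")
  case True
  have "(\<Sum>b\<in>{b\<in>{1..N}. x < real b}. 1 / (real b)^2) \<le> (\<Sum>b\<in>{1..N}. 1 / (real b)^2)"
    by (intro sum_mono2) auto
  also have "\<dots> \<le> 2"
  proof (cases "N \<ge> 1")
    case True
    then have "{1..N} = insert 1 {1<..N}"
      by auto
    then show ?thesis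
      using sum_inverse_squares_greaterThan_le[of 1 N] by simp
  qed simp
  also have "2 \<le> 2 / x"
    using True assms by (simp add: field_simps)
  finally show ?thesis .
next
  case False
  define m where "m = nat \<lfloor>x\<rfloor>"
  have m1: "m \<ge> 1" and mx: "real m \<le> x" "x < real m + 1"
    using False by (auto simp: m_def le_nat_floor)
  then have "{b\<in>{1..N}. x < real b} = {m<..N}"
    by (auto; linarith)
  then have "(\<Sum>b\<in>{b\<in>{1..N}. x < real b}. 1 / (real b)^2) \<le> 1 / real m"
    using sum_inverse_squares_greaterThan_le[OF m1] by simp
  also have "\<dots> \<le> 2 / x"
    using mx m1 assms by (simp add: field_simps)
  finally show ?thesis .
qed

lemma le_of_mult_square_le:
  fixes a b Q :: nat
  assumes "1 \<le> a" "1 \<le> b" "a * b^2 \<le> Q"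
  shows "a \<le> Q" "b \<le> Q"
proof -
  have "a \<le> a * b^2" "b \<le> a * b^2"
    using assms by (simp_all add: power2_eq_square)
  with assms(3) show "a \<le> Q" "b \<le> Q"
    by linarith+
qed

lemma card_mult_square_le_le_sqrt:
  fixes a N Q :: nat
  assumes "1 \<le> a"
  shows "real (card {b\<in>{1..N}. a * b^2 \<le> Q}) \<le> sqrt (real Q / real a)"
proof -
  define y where "y = sqrt (real Q / real a)"
  have "{b\<in>{1..N}. a * b^2 \<le> Q} \<subseteq> {1..nat \<lfloor>y\<rfloor>}"
  proof
    fix b
    assume b: "b \<in> {b\<in>{1..N}. a * b^2 \<le> Q}"
    then have "real a * (real b)^2 \<le> real Q"
      by (simp flip: of_nat_power of_nat_mult)
    then have "sqrt ((real b)^2) \<le> y"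
      unfolding y_def using assms by (intro real_sqrt_le_mono) (simp add: field_simps)
    then show "b \<in> {1..nat \<lfloor>y\<rfloor>}"
      using b by (auto simp: le_nat_floor)
  qed
  then have "real (card {b\<in>{1..N}. a * b^2 \<le> Q}) \<le> real (nat \<lfloor>y\<rfloor>)"
    by (metis card_atLeastAtMost card_mono diff_Suc_1 finite_atLeastAtMost of_nat_le_iff)
  also have "\<dots> \<le> y"
    by (simp add: y_def)
  finally show ?thesis
    by (simp add: y_def)
qed

lemma sum_inverse_squares_mult_square_gt_le:
  fixes a N Q :: nat
  assumes "1 \<le> a" "1 \<le> Q"
  shows "(\<Sum>b\<in>{b\<in>{1..N}. Q < a * b^2}. 1 / (real b)^2) \<le> 2 / sqrt (real Q / real a)"
proof -
  define x where "x = sqrt (real Q / real a)"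
  have "Q < a * b^2 \<longleftrightarrow> x < real b" for b
  proof -
    have "Q < a * b^2 \<longleftrightarrow> real Q / real a < (real b)^2"
      using assms by (simp add: field_simps flip: of_nat_power of_nat_mult)
    also have "\<dots> \<longleftrightarrow> x < real b"
      unfolding x_def by (metis real_sqrt_abs real_sqrt_less_iff abs_of_nat)
    finally show ?thesis .
  qed
  then have "{b\<in>{1..N}. Q < a * b^2} = {b\<in>{1..N}. x < real b}"
    by auto
  moreover have "x > 0"
    using assms by (simp add: x_def)
  ultimately show ?thesis
    using sum_inverse_squares_gt_le[of x N] by (simp add: x_def)
qed

lemma sum_inverse_fst_le:
  fixes Q :: nat
  assumes "F \<subseteq> {(a, b). 1 \<le> a \<and> 1 \<le> b \<and> a * b^2 \<le> Q}"
  shows "(\<Sum>(a, b)\<in>F. 1 / real a) \<le> 3 * sqrt (real Q)"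
proof -
  define Box where "Box = (SIGMA a:{1..Q}. {b\<in>{1..Q}. a * b^2 \<le> Q})"
  have "F \<subseteq> Box"
  proof clarify
    fix a b
    assume "(a, b) \<in> F"
    then have "1 \<le> a" "1 \<le> b" "a * b^2 \<le> Q"
      using assms by auto
    then show "(a, b) \<in> Box"
      using le_of_mult_square_le[of a b Q] by (simp add: Box_def)
  qed
  then have "(\<Sum>(a, b)\<in>F. 1 / real a) \<le> (\<Sum>(a, b)\<in>Box. 1 / real a)"
    by (intro sum_mono2) (auto simp: Box_def)
  also have "\<dots> = (\<Sum>a\<in>{1..Q}. \<Sum>b\<in>{b\<in>{1..Q}. a * b^2 \<le> Q}. 1 / real a)"
    unfolding Box_def by (subst sum.Sigma) auto
  also have "\<dots> = (\<Sum>a\<in>{1..Q}. real (card {b\<in>{1..Q}. a * b^2 \<le> Q}) * (1 / real a))"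
    by simp
  also have "\<dots> \<le> (\<Sum>a\<in>{1..Q}. sqrt (real Q / real a) * (1 / real a))"
    by (intro sum_mono mult_right_mono card_mult_square_le_le_sqrt) auto
  also have "\<dots> = sqrt (real Q) * (\<Sum>a\<in>{1..Q}. 1 / (real a * sqrt (real a)))"
    unfolding sum_distrib_left by (intro sum.cong refl) (simp add: real_sqrt_divide)
  also have "\<dots> \<le> sqrt (real Q) * 3"
    by (intro mult_left_mono sum_inverse_three_halves_le) simp
  finally show ?thesis
    by simp
qed

lemma sum_inverse_squares_prod_gt_le:
  fixes Q :: nat
  assumes "finite F" "F \<subseteq> {(a, b). 1 \<le> a \<and> 1 \<le> b \<and> Q < a * b^2}" "Q \<ge> 1"
  shows "(\<Sum>(a, b)\<in>F. 1 / ((real a)^2 * (real b)^2)) \<le> 6 / sqrt (real Q)"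
proof -
  obtain N where N: "\<forall>x\<in>fst ` F \<union> snd ` F. x < N"
    using assms(1) finite_nat_set_iff_bounded[of "fst ` F \<union> snd ` F"] by blast
  define Box where "Box = (SIGMA a:{1..N}. {b\<in>{1..N}. Q < a * b^2})"
  have "F \<subseteq> Box"
  proof clarify
    fix a b
    assume ab: "(a, b) \<in> F"
    then have "a < N" "b < N"
      using N by force+
    then show "(a, b) \<in> Box"
      using ab assms(2) by (auto simp: Box_def)
  qed
  then have "(\<Sum>(a, b)\<in>F. 1 / ((real a)^2 * (real b)^2)) \<le> (\<Sum>(a, b)\<in>Box. 1 / ((real a)^2 * (real b)^2))"
    by (intro sum_mono2) (auto simp: Box_def)
  also have "\<dots> = (\<Sum>a\<in>{1..N}. \<Sum>b\<in>{b\<in>{1..N}. Q < a * b^2}. 1 / ((real a)^2 * (real b)^2))"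
    unfolding Box_def by (subst sum.Sigma) auto
  also have "\<dots> = (\<Sum>a\<in>{1..N}. 1 / (real a)^2 * (\<Sum>b\<in>{b\<in>{1..N}. Q < a * b^2}. 1 / (real b)^2))"
    by (simp add: sum_distrib_left)
  also have "\<dots> \<le> (\<Sum>a\<in>{1..N}. 1 / (real a)^2 * (2 / sqrt (real Q / real a)))"
    using assms(3) by (intro sum_mono mult_left_mono sum_inverse_squares_mult_square_gt_le) auto
  also have "\<dots> = (2 / sqrt (real Q)) * (\<Sum>a\<in>{1..N}. 1 / (real a * sqrt (real a)))"
    unfolding sum_distrib_left
  proof (intro sum.cong refl)
    fix a
    assume "a \<in> {1..N}"
    define s where "s = sqrt (real a)"
    have s: "0 < s" "real a = s^2"
      using \<open>a \<in> {1..N}\<close> by (simp_all add: s_def)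
    show "1 / (real a)^2 * (2 / sqrt (real Q / real a)) = 2 / sqrt (real Q) * (1 / (real a * sqrt (real a)))"
      unfolding real_sqrt_divide s_def[symmetric] s(2) using s(1) by (simp add: field_simps power2_eq_square)
  qed
  also have "\<dots> \<le> (2 / sqrt (real Q)) * 3"
    by (intro mult_left_mono sum_inverse_three_halves_le) simp
  finally show ?thesis
    by simp
qed

lemma sum_of_nat_atLeastAtMost_real: "(\<Sum>k\<in>{1..m}. real k) = real m * (real m + 1) / 2"
  by (induction m) (auto simp: field_simps)

lemma sum_multiples_le_eq:
  assumes "d \<ge> 1"
  shows "(\<Sum>n\<in>{n\<in>{1..Q}. d dvd n}. real n) = real d * (real (Q div d) * (real (Q div d) + 1) / 2)"
proof -
  have "{n\<in>{1..Q}. d dvd n} = (\<lambda>k. d * k) ` {1..Q div d}"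
  proof (intro equalityI subsetI)
    fix n
    assume "n \<in> {n\<in>{1..Q}. d dvd n}"
    then obtain k where "n = d * k" "1 \<le> n" "n \<le> Q"
      by (auto elim: dvdE)
    moreover have "1 \<le> k" "k \<le> Q div d"
      using calculation assms by (auto simp: less_eq_div_iff_mult_less_eq mult.commute intro: Suc_leI)
    ultimately show "n \<in> (\<lambda>k. d * k) ` {1..Q div d}"
      by auto
  next
    fix n
    assume "n \<in> (\<lambda>k. d * k) ` {1..Q div d}"
    then obtain k where "n = d * k" "k \<in> {1..Q div d}"
      by blast
    then have "n = d * k" "1 \<le> k" "k \<le> Q div d"
      by simp_all
    moreover have "d * (Q div d) \<le> Q"
      by simp
    ultimately show "n \<in> {n\<in>{1..Q}. d dvd n}"
      using assms by (auto intro: order_trans[OF mult_le_mono2])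
  qed
  moreover have "inj_on (\<lambda>k. d * k) {1..Q div d}"
    using assms by (auto simp: inj_on_def)
  ultimately have "(\<Sum>n\<in>{n\<in>{1..Q}. d dvd n}. real n) = (\<Sum>k\<in>{1..Q div d}. real (d * k))"
    by (simp add: sum.reindex)
  also have "\<dots> = real d * (\<Sum>k\<in>{1..Q div d}. real k)"
    by (simp add: sum_distrib_left)
  finally show ?thesis
    by (simp only: sum_of_nat_atLeastAtMost_real)
qed

lemma abs_triangular_approx_le:
  fixes D m r :: real
  assumes "1 \<le> D" "0 \<le> m" "0 \<le> r" "r \<le> D"
  shows "\<bar>D * (m * (m + 1) / 2) - (D * m + r)^2 / (2 * D)\<bar> \<le> D * m + r"
proof -
  define E where "E = D * (m * (m + 1) / 2) - (D * m + r)^2 / (2 * D)"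
  have key: "2 * D * E = D*D*m - 2*(D*m*r) - r*r"
    using assms by (simp add: E_def field_simps power2_eq_square)
  have "D*D*m + 2*(D*r) + 2*(D*m*r) + r*r \<ge> 0"
    using assms by simp
  then have "2 * D * E \<le> 2 * D * (D * m + r)"
    unfolding key by (simp add: algebra_simps)
  then have "E \<le> D * m + r"
    by (rule mult_left_le_imp_le) (use assms in simp)
  text \<open>The lower bound uses \<open>r \<le> D\<close>: \<open>D\<^sup>2m - 2Dmr - r\<^sup>2 + 2D(Dm + r) = Dm(3D - 2r) + r(2D - r)\<close>.\<close>
  have "D*m*(3*D - 2*r) \<ge> 0" "r*(2*D - r) \<ge> 0"
    using assms by simp_all
  then have "2 * D * (- (D * m + r)) \<le> 2 * D * E"
    unfolding key by (simp add: algebra_simps)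
  then have "- (D * m + r) \<le> E"
    by (rule mult_left_le_imp_le) (use assms in simp)
  with \<open>E \<le> D * m + r\<close> show ?thesis
    unfolding E_def abs_le_iff by linarith
qed

lemma sum_multiples_le_approx:
  assumes "1 \<le> d"
  shows "\<bar>(\<Sum>n\<in>{n\<in>{1..Q}. d dvd n}. real n) - (real Q)^2 / (2 * real d)\<bar> \<le> real Q"
proof -
  have Q: "real Q = real d * real (Q div d) + real (Q mod d)"
    by (simp flip: of_nat_mult of_nat_add)
  have "real (Q mod d) \<le> real d"
    using assms by (simp add: less_imp_le)
  then have "\<bar>real d * (real (Q div d) * (real (Q div d) + 1) / 2)
      - (real d * real (Q div d) + real (Q mod d))^2 / (2 * real d)\<bar>
      \<le> real d * real (Q div d) + real (Q mod d)"
    using assms by (intro abs_triangular_approx_le) auto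
  then show ?thesis
    by (simp only: sum_multiples_le_eq[OF assms] Q[symmetric])
qed

section \<open>The count up to a truncated constant\<close>

definition pairs_upto :: "nat \<Rightarrow> (nat \<times> nat) set" where
  "pairs_upto Q = {(a, b)\<in>sqfree_coprime_pairs. a * b^2 \<le> Q}"

definition sqfree_totient_sum :: "nat \<Rightarrow> real" where
  "sqfree_totient_sum Q = (\<Sum>n\<in>{1..Q}. if squarefree n then real (totient n) else 0)"

definition truncated_const :: "nat \<Rightarrow> real" where
  "truncated_const Q = (\<Sum>(a, b)\<in>pairs_upto Q. pair_weight a b / (real a * (real b)^2))"

lemma sqfree_coprime_pairs_ge_1: "(a, b) \<in> sqfree_coprime_pairs \<Longrightarrow> 1 \<le> a \<and> 1 \<le> b"
  by (auto simp: sqfree_coprime_pairs_def Suc_le_eq squarefree_pos_nat)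

lemma pairs_upto_subset: "pairs_upto Q \<subseteq> {(a, b). 1 \<le> a \<and> 1 \<le> b \<and> a * b^2 \<le> Q}"
  by (auto simp: pairs_upto_def dest: sqfree_coprime_pairs_ge_1)

lemma finite_pairs_upto: "finite (pairs_upto Q)"
proof (rule finite_subset)
  show "pairs_upto Q \<subseteq> {..Q} \<times> {..Q}"
  proof
    fix x
    assume "x \<in> pairs_upto Q"
    then obtain a b where "x = (a, b)" "1 \<le> a" "1 \<le> b" "a * b^2 \<le> Q"
      using pairs_upto_subset by (cases x) auto
    then show "x \<in> {..Q} \<times> {..Q}"
      using le_of_mult_square_le[of a b Q] by simp
  qed
qed simp

lemma pairs_upto_mono: "Q \<le> N \<Longrightarrow> pairs_upto Q \<subseteq> pairs_upto N"
  by (auto simp: pairs_upto_def)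

lemma abs_pair_weight_le:
  assumes "squarefree a"
  shows "\<bar>pair_weight a b\<bar> \<le> 1 / real a"
proof -
  have "\<bar>\<Prod>p\<in>prime_factors a. - 1 / real p\<bar> = 1 / real (\<Prod>(prime_factors a))"
    by (simp add: abs_prod prod_dividef)
  also have "\<dots> = 1 / real a"
    using prod_prime_factors_squarefree[OF assms] by simp
  finally have a: "\<bar>\<Prod>p\<in>prime_factors a. - 1 / real p\<bar> = 1 / real a" .
  have "\<bar>\<Prod>p\<in>prime_factors b. - (1 - 1 / real p)\<bar> = (\<Prod>p\<in>prime_factors b. \<bar>1 - 1 / real p\<bar>)"
    by (simp only: abs_prod abs_minus_cancel)
  also have "\<dots> \<le> (\<Prod>p\<in>prime_factors b. 1)"
  proof (intro prod_mono conjI)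
    fix p
    assume "p \<in> prime_factors b"
    then have "1 \<le> real p"
      using prime_ge_1_nat[OF in_prime_factors_imp_prime] by simp
    then show "\<bar>1 - 1 / real p\<bar> \<le> 1"
      by (simp add: abs_le_iff field_simps)
  qed simp
  finally have b: "\<bar>\<Prod>p\<in>prime_factors b. - (1 - 1 / real p)\<bar> \<le> 1"
    by simp
  have "1 / real a * \<bar>\<Prod>p\<in>prime_factors b. - (1 - 1 / real p)\<bar> \<le> 1 / real a * 1"
    by (rule mult_left_mono[OF b]) simp
  then show ?thesis
    unfolding pair_weight_def abs_mult a by simp
qed

lemma sqfree_totient_sum_eq_sum_pairs_upto:
  "sqfree_totient_sum Q
     = (\<Sum>(a, b)\<in>pairs_upto Q. pair_weight a b * (\<Sum>n\<in>{n\<in>{1..Q}. a * b^2 dvd n}. real n))"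
proof -
  have "{(a, b)\<in>sqfree_coprime_pairs. a * b^2 dvd n} = {x\<in>pairs_upto Q. case x of (a, b) \<Rightarrow> a * b^2 dvd n}"
    if "n \<in> {1..Q}" for n
    using that by (auto simp: pairs_upto_def dest: dvd_imp_le)
  then have "sqfree_totient_sum Q
      = (\<Sum>n\<in>{1..Q}. \<Sum>x\<in>{x\<in>pairs_upto Q. case x of (a, b) \<Rightarrow> a * b^2 dvd n}.
            real n * (case x of (a, b) \<Rightarrow> pair_weight a b))"
    unfolding sqfree_totient_sum_def
    by (intro sum.cong refl) (simp add: squarefree_totient_eq_sum_pair_weight sum_distrib_left case_prod_unfold)
  also have "\<dots> = (\<Sum>x\<in>pairs_upto Q. \<Sum>n\<in>{n\<in>{1..Q}. case x of (a, b) \<Rightarrow> a * b^2 dvd n}.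
            real n * (case x of (a, b) \<Rightarrow> pair_weight a b))"
    by (rule sum.swap_restrict) (simp_all add: finite_pairs_upto)
  also have "\<dots> = (\<Sum>(a, b)\<in>pairs_upto Q. pair_weight a b * (\<Sum>n\<in>{n\<in>{1..Q}. a * b^2 dvd n}. real n))"
    by (intro sum.cong refl) (auto simp: sum_distrib_left mult.commute)
  finally show ?thesis .
qed

lemma sqfree_totient_sum_approx_truncated:
  assumes "Q \<ge> 1"
  shows "\<bar>sqfree_totient_sum Q - (real Q)^2 / 2 * truncated_const Q\<bar> \<le> 3 * real Q * sqrt (real Q)"
proof -
  let ?M = "\<lambda>a b. \<Sum>n\<in>{n\<in>{1..Q}. a * b^2 dvd n}. real n"
  have "sqfree_totient_sum Q - (real Q)^2 / 2 * truncated_const Q =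
     (\<Sum>(a, b)\<in>pairs_upto Q. pair_weight a b * (?M a b - (real Q)^2 / (2 * real (a * b^2))))"
    unfolding sqfree_totient_sum_eq_sum_pairs_upto truncated_const_def
    by (simp add: sum_distrib_left sum_subtractf[symmetric] case_prod_unfold field_simps)
  also have "\<bar>\<dots>\<bar> \<le> (\<Sum>(a, b)\<in>pairs_upto Q. 1 / real a * real Q)"
  proof (rule order_trans[OF sum_abs], intro sum_mono)
    fix x
    assume x: "x \<in> pairs_upto Q"
    obtain a b where ab: "x = (a, b)" "squarefree a" "1 \<le> a * b^2"
      using x sqfree_coprime_pairs_ge_1[of "fst x" "snd x"]
      by (cases x) (auto simp: pairs_upto_def sqfree_coprime_pairs_def)
    have "\<bar>pair_weight a b * (?M a b - (real Q)^2 / (2 * real (a * b^2)))\<bar> \<le> 1 / real a * real Q"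
      unfolding abs_mult
      by (intro mult_mono abs_pair_weight_le sum_multiples_le_approx ab) auto
    then show "\<bar>case x of (a, b) \<Rightarrow> pair_weight a b * (?M a b - (real Q)^2 / (2 * real (a * b^2)))\<bar>
        \<le> (case x of (a, b) \<Rightarrow> 1 / real a * real Q)"
      using ab by simp
  qed
  also have "\<dots> = real Q * (\<Sum>(a, b)\<in>pairs_upto Q. 1 / real a)"
    by (simp add: sum_distrib_left case_prod_unfold mult.commute)
  also have "\<dots> \<le> real Q * (3 * sqrt (real Q))"
    by (intro mult_left_mono sum_inverse_fst_le pairs_upto_subset) simp
  finally show ?thesis
    by simp
qed

lemma abs_sum_pair_weight_tail_le:
  assumes "finite F" "F \<subseteq> sqfree_coprime_pairs" "\<And>a b. (a, b) \<in> F \<Longrightarrow> Q < a * b^2" "Q \<ge> 1"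
  shows "\<bar>\<Sum>(a, b)\<in>F. pair_weight a b / (real a * (real b)^2)\<bar> \<le> 6 / sqrt (real Q)"
proof -
  have "\<bar>pair_weight a b / (real a * (real b)^2)\<bar> \<le> 1 / ((real a)^2 * (real b)^2)"
    if "(a, b) \<in> F" for a b
  proof -
    have "squarefree a" "1 \<le> a" "1 \<le> b"
      using that assms(2) sqfree_coprime_pairs_ge_1 by (auto simp: sqfree_coprime_pairs_def)
    then have "\<bar>pair_weight a b\<bar> / (real a * (real b)^2) \<le> (1 / real a) / (real a * (real b)^2)"
      by (intro divide_right_mono abs_pair_weight_le) auto
    then show ?thesis
      by (simp add: abs_div power2_eq_square)
  qed
  then have "\<bar>\<Sum>(a, b)\<in>F. pair_weight a b / (real a * (real b)^2)\<bar>
      \<le> (\<Sum>(a, b)\<in>F. 1 / ((real a)^2 * (real b)^2))"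
    by (intro order_trans[OF sum_abs] sum_mono) auto
  also have "\<dots> \<le> 6 / sqrt (real Q)"
    using assms sqfree_coprime_pairs_ge_1 by (intro sum_inverse_squares_prod_gt_le) auto
  finally show ?thesis .
qed

lemma abs_truncated_const_diff_le:
  assumes "Q \<ge> 1" "Q \<le> N"
  shows "\<bar>truncated_const N - truncated_const Q\<bar> \<le> 6 / sqrt (real Q)"
proof -
  have "truncated_const N - truncated_const Q
      = (\<Sum>(a, b)\<in>pairs_upto N - pairs_upto Q. pair_weight a b / (real a * (real b)^2))"
    unfolding truncated_const_def using pairs_upto_mono[OF assms(2)] finite_pairs_upto
    by (simp add: sum_diff)
  also have "\<bar>\<dots>\<bar> \<le> 6 / sqrt (real Q)"
    using finite_pairs_upto assms by (intro abs_sum_pair_weight_tail_le) (auto simp: pairs_upto_def)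
  finally show ?thesis .
qed

lemma Cauchy_truncated_const: "Cauchy truncated_const"
proof (rule metric_CauchyI)
  fix e :: real
  assume e: "e > 0"
  define M where "M = nat \<lceil>(12 / e)^2\<rceil> + 1"
  have M1: "M \<ge> 1"
    by (simp add: M_def)
  have "(12 / e)^2 < real M"
    unfolding M_def by linarith
  then have "12 / e < sqrt (real M)"
    by (rule real_less_rsqrt)
  then have Me: "12 / sqrt (real M) < e"
    using e M1 by (simp add: field_simps)
  have "dist (truncated_const m) (truncated_const n) < e" if "m \<ge> M" "n \<ge> M" for m n
  proof -
    have "dist (truncated_const m) (truncated_const n)
        \<le> \<bar>truncated_const m - truncated_const M\<bar> + \<bar>truncated_const n - truncated_const M\<bar>"
      by (simp add: dist_real_def)
    also have "\<dots> \<le> 6 / sqrt (real M) + 6 / sqrt (real M)"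
      using abs_truncated_const_diff_le[OF M1] that by (intro add_mono) auto
    finally show ?thesis
      using Me by simp
  qed
  then show "\<exists>M. \<forall>m\<ge>M. \<forall>n\<ge>M. dist (truncated_const m) (truncated_const n) < e"
    by blast
qed

definition pair_const :: real where
  "pair_const = lim truncated_const"

lemma truncated_const_LIMSEQ: "truncated_const \<longlonglongrightarrow> pair_const"
  unfolding pair_const_def using Cauchy_truncated_const by (simp add: Cauchy_convergent_iff convergent_LIMSEQ_iff)

lemma abs_pair_const_diff_le:
  assumes "Q \<ge> 1"
  shows "\<bar>pair_const - truncated_const Q\<bar> \<le> 6 / sqrt (real Q)"
proof (rule LIMSEQ_le_const2)
  show "(\<lambda>N. \<bar>truncated_const N - truncated_const Q\<bar>) \<longlonglongrightarrow> \<bar>pair_const - truncated_const Q\<bar>"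
    by (intro tendsto_intros truncated_const_LIMSEQ)
  show "\<exists>N. \<forall>n\<ge>N. \<bar>truncated_const n - truncated_const Q\<bar> \<le> 6 / sqrt (real Q)"
    using abs_truncated_const_diff_le[OF assms] by blast
qed

lemma sqfree_totient_sum_approx:
  assumes "Q \<ge> 1"
  shows "\<bar>sqfree_totient_sum Q - (real Q)^2 / 2 * pair_const\<bar> \<le> 6 * real Q * sqrt (real Q)"
proof -
  have "\<bar>(real Q)^2 / 2 * (truncated_const Q - pair_const)\<bar> = (real Q)^2 / 2 * \<bar>pair_const - truncated_const Q\<bar>"
    by (simp add: abs_mult abs_minus_commute)
  also have "\<dots> \<le> (real Q)^2 / 2 * (6 / sqrt (real Q))"
    by (intro mult_left_mono abs_pair_const_diff_le assms) simp
  also have "\<dots> = 3 * real Q * (real Q / sqrt (real Q))"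
    by (simp add: field_simps power2_eq_square)
  also have "\<dots> = 3 * real Q * sqrt (real Q)"
    by (simp add: real_div_sqrt)
  finally have tail: "\<bar>(real Q)^2 / 2 * (truncated_const Q - pair_const)\<bar> \<le> 3 * real Q * sqrt (real Q)" .
  have "sqfree_totient_sum Q - (real Q)^2 / 2 * pair_const
      = (sqfree_totient_sum Q - (real Q)^2 / 2 * truncated_const Q) + (real Q)^2 / 2 * (truncated_const Q - pair_const)"
    unfolding right_diff_distrib by simp
  then have "\<bar>sqfree_totient_sum Q - (real Q)^2 / 2 * pair_const\<bar>
      \<le> \<bar>sqfree_totient_sum Q - (real Q)^2 / 2 * truncated_const Q\<bar> + \<bar>(real Q)^2 / 2 * (truncated_const Q - pair_const)\<bar>"
    by (simp only: abs_triangle_ineq)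
  then show ?thesis
    using tail sqfree_totient_sum_approx_truncated[OF assms] by linarith
qed

section \<open>The constant as an Euler product\<close>

definition primes_le :: "nat \<Rightarrow> nat set" where
  "primes_le M = {p. prime p \<and> p \<le> M}"

lemma finite_primes_le: "finite (primes_le M)"
  and prime_primes_le: "\<forall>p\<in>primes_le M. prime p"
  by (auto simp: primes_le_def)

definition smooth_pairs :: "nat \<Rightarrow> (nat \<times> nat) set" where
  "smooth_pairs M = {(a, b)\<in>sqfree_coprime_pairs. prime_factors a \<subseteq> primes_le M \<and> prime_factors b \<subseteq> primes_le M}"

lemma finite_smooth_pairs: "finite (smooth_pairs M)"
proof -
  have "bij_betw (\<lambda>(B, A). (\<Prod>A, \<Prod>B)) (SIGMA B:Pow (primes_le M). Pow (primes_le M - B)) (smooth_pairs M)"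
    unfolding smooth_pairs_def
    by (rule bij_betw_prime_sets_sqfree_coprime_pairs[OF finite_primes_le prime_primes_le subset_refl])
  moreover have "finite (SIGMA B:Pow (primes_le M). Pow (primes_le M - B))"
    using finite_primes_le by auto
  ultimately show ?thesis
    by (simp add: bij_betw_finite)
qed

lemma pairs_upto_subset_smooth_pairs: "pairs_upto M \<subseteq> smooth_pairs M"
proof clarify
  fix a b
  assume ab: "(a, b) \<in> pairs_upto M"
  then have pair: "(a, b) \<in> sqfree_coprime_pairs" and "1 \<le> a" "1 \<le> b" "a * b^2 \<le> M"
    using pairs_upto_subset by (auto simp: pairs_upto_def)
  then have "a \<le> M" "b \<le> M"
    using le_of_mult_square_le[of a b M] by simp_all
  moreover have "prime_factors n \<subseteq> primes_le M" if "1 \<le> n" "n \<le> M" for n :: nat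
  proof
    fix p
    assume "p \<in> prime_factors n"
    then have "prime p" "p \<le> n"
      using that dvd_imp_le[of p n] by (auto simp: in_prime_factors_iff)
    then show "p \<in> primes_le M"
      using that by (simp add: primes_le_def)
  qed
  ultimately show "(a, b) \<in> smooth_pairs M"
    using pair \<open>1 \<le> a\<close> \<open>1 \<le> b\<close> by (simp add: smooth_pairs_def)
qed

lemma euler_factor_eq:
  fixes x :: real
  assumes "x > 0"
  shows "1 + - 1 / x^2 + - (1 - 1 / x) / x^2 = (1 - 1 / x^2) * (1 - 1 / (x * (x + 1)))"
proof -
  have x0: "x \<noteq> 0" "x + 1 \<noteq> 0"
    using assms by auto
  have "(1 - 1 / x^2) * (1 - 1 / (x * (x + 1))) = ((x^2 - 1) / x^2) * ((x * (x + 1) - 1) / (x * (x + 1)))"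
    using x0 by (simp add: diff_divide_distrib)
  also have "\<dots> = ((x^2 - 1) * (x * (x + 1) - 1)) / (x^2 * (x * (x + 1)))"
    by simp
  also have "(x^2 - 1) * (x * (x + 1) - 1) = (x^3 - 2*x + 1) * (x + 1)"
    by (simp add: algebra_simps power2_eq_square power3_eq_cube)
  also have "x^2 * (x * (x + 1)) = x^3 * (x + 1)"
    by (simp add: algebra_simps power2_eq_square power3_eq_cube)
  also have "(x^3 - 2*x + 1) * (x + 1) / (x^3 * (x + 1)) = (x^3 - 2*x + 1) / x^3"
    using x0 by simp
  also have "\<dots> = 1 + - 1 / x^2 + - (1 - 1 / x) / x^2"
    using x0 by (simp add: field_simps power2_eq_square power3_eq_cube)
  finally show ?thesis ..
qed

lemma sum_smooth_pairs_eq_prod: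
  "(\<Sum>(a, b)\<in>smooth_pairs M. pair_weight a b / (real a * (real b)^2))
     = (\<Prod>p\<in>primes_le M. (1 - 1 / (real p)^2) * (1 - 1 / (real p * (real p + 1))))"
proof -
  define f :: "nat \<Rightarrow> real" where "f p = - 1 / (real p)^2" for p
  define g :: "nat \<Rightarrow> real" where "g p = - (1 - 1 / real p) / (real p)^2" for p
  have "(\<Sum>(a, b)\<in>smooth_pairs M. pair_weight a b / (real a * (real b)^2))
      = (\<Sum>B\<in>Pow (primes_le M). \<Sum>A\<in>Pow (primes_le M - B).
            pair_weight (\<Prod>A) (\<Prod>B) / (real (\<Prod>A) * (real (\<Prod>B))^2))"
    unfolding smooth_pairs_def
    by (rule sum_sqfree_coprime_pairs_eq_sum_prime_sets[OF finite_primes_le prime_primes_le subset_refl])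
  also have "\<dots> = (\<Sum>B\<in>Pow (primes_le M). \<Sum>A\<in>Pow (primes_le M - B). prod f A * prod g B)"
  proof (intro sum.cong refl)
    fix B A
    assume "B \<in> Pow (primes_le M)" "A \<in> Pow (primes_le M - B)"
    then have "finite A" "finite B" "\<forall>p\<in>A. prime p" "\<forall>p\<in>B. prime p"
      using finite_primes_le prime_primes_le by (auto intro: finite_subset)
    then have "pair_weight (\<Prod>A) (\<Prod>B) / (real (\<Prod>A) * (real (\<Prod>B))^2)
        = ((\<Prod>p\<in>A. - 1 / real p) / (\<Prod>p\<in>A. real p))
          * ((\<Prod>p\<in>B. - (1 - 1 / real p)) / (\<Prod>p\<in>B. (real p)^2))"
      by (simp add: pair_weight_prod_primes of_nat_prod prod_power_distrib)
    also have "\<dots> = prod f A * prod g B"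
      by (simp add: f_def g_def prod_dividef[symmetric] power2_eq_square)
    finally show "pair_weight (\<Prod>A) (\<Prod>B) / (real (\<Prod>A) * (real (\<Prod>B))^2) = prod f A * prod g B" .
  qed
  also have "\<dots> = (\<Prod>p\<in>primes_le M. 1 + f p + g p)"
    using sum_disjoint_subsets_prod[OF finite_primes_le subset_refl, of f g] by simp
  also have "\<dots> = (\<Prod>p\<in>primes_le M. (1 - 1 / (real p)^2) * (1 - 1 / (real p * (real p + 1))))"
    unfolding f_def g_def
    by (intro prod.cong refl euler_factor_eq) (auto simp: primes_le_def prime_gt_0_nat)
  finally show ?thesis .
qed

lemma euler_prod_LIMSEQ_pair_const:
  "(\<lambda>M. \<Prod>p\<in>primes_le M. (1 - 1 / (real p)^2) * (1 - 1 / (real p * (real p + 1)))) \<longlonglongrightarrow> pair_const"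
proof -
  let ?e = "\<lambda>M. \<Prod>p\<in>primes_le M. (1 - 1 / (real p)^2) * (1 - 1 / (real p * (real p + 1)))"
  have bound: "\<bar>?e M - truncated_const M\<bar> \<le> 6 / sqrt (real M)" if "M \<ge> 1" for M
  proof -
    have "?e M - truncated_const M
        = (\<Sum>(a, b)\<in>smooth_pairs M - pairs_upto M. pair_weight a b / (real a * (real b)^2))"
      unfolding sum_smooth_pairs_eq_prod[symmetric] truncated_const_def
      using pairs_upto_subset_smooth_pairs finite_smooth_pairs by (simp add: sum_diff)
    also have "\<bar>\<dots>\<bar> \<le> 6 / sqrt (real M)"
      using finite_smooth_pairs that
      by (intro abs_sum_pair_weight_tail_le) (auto simp: pairs_upto_def smooth_pairs_def)
    finally show ?thesis .
  qed
  have "eventually (\<lambda>M. norm (?e M - truncated_const M) \<le> 6 / sqrt (real M)) sequentially"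
    unfolding eventually_sequentially real_norm_def using bound by blast
  moreover have "(\<lambda>M. 6 / sqrt (real M)) \<longlonglongrightarrow> 0"
    by real_asymp
  ultimately have "(\<lambda>M. ?e M - truncated_const M) \<longlonglongrightarrow> 0"
    by (rule Lim_null_comparison)
  from tendsto_add[OF this truncated_const_LIMSEQ] show ?thesis
    by simp
qed

subsection \<open>The Euler product of \<open>\<zeta>(2)\<close>\<close>

text \<open>The term at \<open>n = 0\<close> is \<open>1 / 0 = 0\<close>.\<close>
lemma inverse_squares_sums_nat: "(\<lambda>n. 1 / (real n)^2) sums (pi^2 / 6)"
proof -
  have "(\<lambda>n. 1 / (real (Suc n))^2) sums (pi^2 / 6)"
    using inverse_squares_sums by (simp add: add.commute)
  then show ?thesis
    by (subst (asm) sums_Suc_iff) simp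
qed

lemma inverse_squares_multiples_sums:
  assumes "d > 0"
  shows "(\<lambda>m. if d dvd m then 1 / (real m)^2 else 0) sums (pi^2 / 6 / (real d)^2)"
proof -
  have "(\<lambda>n. 1 / (real d)^2 * (1 / (real n)^2)) sums (1 / (real d)^2 * (pi^2 / 6))"
    by (rule sums_mult[OF inverse_squares_sums_nat])
  then have "(\<lambda>n. (\<lambda>m. if d dvd m then 1 / (real m)^2 else 0) (d * n)) sums (pi^2 / 6 / (real d)^2)"
    by (simp add: power_mult_distrib mult.commute)
  then show ?thesis
    using assms by (subst (asm) sums_mono_reindex) (auto simp: strict_mono_def elim!: dvdE)
qed

lemma sum_Pow_minus_one_power_card:
  "finite X \<Longrightarrow> (\<Sum>B\<in>Pow X. (- 1 :: real) ^ card B) = (if X = {} then 1 else 0)"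
  using prod_add[of X "\<lambda>_. - 1 :: real" "\<lambda>_. 1"] by (simp add: power_0_left card_eq_0_iff)

lemma sum_Pow_minus_one_power_card_dvd:
  fixes P :: "nat set"
  assumes "finite P" "\<forall>p\<in>P. prime p" "m > 0"
  shows "(\<Sum>B\<in>{B\<in>Pow P. \<Prod>B dvd m}. (- 1 :: real) ^ card B) = (if P \<inter> prime_factors m = {} then 1 else 0)"
proof -
  have "\<Prod>B dvd m \<longleftrightarrow> B \<subseteq> prime_factors m" if "B \<subseteq> P" for B
  proof -
    have B: "finite B" "\<forall>p\<in>B. prime p"
      using that assms finite_subset by auto
    then have "squarefree (\<Prod>B)"
      by (intro squarefree_prod_primes) simp
    with assms(3) have "\<Prod>B dvd m \<longleftrightarrow> prime_factors (\<Prod>B) \<subseteq> prime_factors m"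
      by (simp add: squarefree_dvd_iff_prime_factors_subset)
    then show ?thesis
      using prime_factors_prod_primes[OF B] by simp
  qed
  then have "{B\<in>Pow P. \<Prod>B dvd m} = Pow (P \<inter> prime_factors m)"
    by auto
  then show ?thesis
    using assms(1) sum_Pow_minus_one_power_card[of "P \<inter> prime_factors m"] by simp
qed

lemma prod_one_minus_inverse_squares_eq_sum:
  fixes P :: "nat set"
  assumes "finite P"
  shows "(\<Prod>p\<in>P. 1 - 1 / (real p)^2) = (\<Sum>B\<in>Pow P. (- 1) ^ card B / (real (\<Prod>B))^2)"
proof -
  have "(\<Prod>p\<in>P. 1 - 1 / (real p)^2) = (\<Prod>p\<in>P. - 1 / (real p)^2 + 1)"
    by simp
  also have "\<dots> = (\<Sum>B\<in>Pow P. (\<Prod>p\<in>B. - 1 / (real p)^2) * (\<Prod>p\<in>P - B. 1))"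
    by (rule prod_add[OF assms])
  also have "\<dots> = (\<Sum>B\<in>Pow P. (- 1) ^ card B / (real (\<Prod>B))^2)"
  proof (intro sum.cong refl)
    fix B
    assume "B \<in> Pow P"
    then have "finite B"
      using assms finite_subset by auto
    have "(\<Prod>p\<in>B. - 1 / (real p)^2) = (\<Prod>p\<in>B. - 1) / (\<Prod>p\<in>B. (real p)^2)"
      by (rule prod_dividef)
    with \<open>finite B\<close> show "(\<Prod>p\<in>B. - 1 / (real p)^2) * (\<Prod>p\<in>P - B. 1) = (- 1) ^ card B / (real (\<Prod>B))^2"
      by (simp add: of_nat_prod prod_power_distrib)
  qed
  finally show ?thesis .
qed

lemma sieved_inverse_squares_sums:
  "(\<lambda>m. if m > 0 \<and> primes_le M \<inter> prime_factors m = {} then 1 / (real m)^2 else 0)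
     sums (pi^2 / 6 * (\<Prod>p\<in>primes_le M. 1 - 1 / (real p)^2))"
proof -
  let ?P = "primes_le M"
  have "(\<lambda>m. \<Sum>B\<in>Pow ?P. (- 1) ^ card B * (if \<Prod>B dvd m then 1 / (real m)^2 else 0))
        sums (\<Sum>B\<in>Pow ?P. (- 1) ^ card B * (pi^2 / 6 / (real (\<Prod>B))^2))"
    by (intro sums_sum sums_mult inverse_squares_multiples_sums)
       (auto intro!: prod_pos simp: primes_le_def prime_gt_0_nat subset_iff)
  moreover have "(\<Sum>B\<in>Pow ?P. (- 1) ^ card B * (if \<Prod>B dvd m then 1 / (real m)^2 else 0))
      = (if m > 0 \<and> ?P \<inter> prime_factors m = {} then 1 / (real m)^2 else 0)" for m
  proof (cases "m = 0")
    case False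
    have "(\<Sum>B\<in>Pow ?P. (- 1) ^ card B * (if \<Prod>B dvd m then 1 / (real m)^2 else 0))
        = (\<Sum>B\<in>Pow ?P. (if \<Prod>B dvd m then (- 1) ^ card B else 0)) * (1 / (real m)^2)"
      unfolding sum_distrib_right by (intro sum.cong refl) simp
    also have "\<dots> = (\<Sum>B\<in>{B\<in>Pow ?P. \<Prod>B dvd m}. (- 1) ^ card B) * (1 / (real m)^2)"
      by (simp only: sum.inter_filter finite_Pow_iff finite_primes_le)
    finally show ?thesis
      using False sum_Pow_minus_one_power_card_dvd[OF finite_primes_le prime_primes_le, of m] by simp
  qed simp
  moreover have "(\<Prod>p\<in>?P. 1 - 1 / (real p)^2) = (\<Sum>B\<in>Pow ?P. (- 1) ^ card B / (real (\<Prod>B))^2)"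
    by (rule prod_one_minus_inverse_squares_eq_sum[OF finite_primes_le])
  ultimately show ?thesis
    by (simp add: sum_distrib_left mult.commute)
qed

text \<open>The sieved series has no terms with \<open>1 < m \<le> M\<close>, so it lies between its term at \<open>m = 1\<close> and
  that term plus the tail \<open>\<Sum>\<^sub>m\<^sub>>\<^sub>M 1/m\<^sup>2\<close>.\<close>
lemma euler_prod_inverse_squares_bounds:
  "1 \<le> pi^2 / 6 * (\<Prod>p\<in>primes_le M. 1 - 1 / (real p)^2)"
  "pi^2 / 6 * (\<Prod>p\<in>primes_le M. 1 - 1 / (real p)^2) \<le> 1 + (pi^2 / 6 - (\<Sum>m\<le>M. 1 / (real m)^2))"
proof -
  define v where "v m = (if m > 0 \<and> primes_le M \<inter> prime_factors m = {} then 1 / (real m)^2 else 0)" for m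
  define u where "u m = (if m = 1 then 1 else 0 :: real)" for m :: nat
  define w where "w m = (if m \<le> M then 0 else 1 / (real m)^2)" for m
  have v: "v sums (pi^2 / 6 * (\<Prod>p\<in>primes_le M. 1 - 1 / (real p)^2))"
    unfolding v_def by (rule sieved_inverse_squares_sums)
  have u: "u sums 1"
    unfolding u_def[abs_def] using sums_single[of 1 "\<lambda>_. 1 :: real"] by simp
  have "(\<lambda>m. 1 / (real m)^2 - (if m \<in> {..M} then 1 / (real m)^2 else 0))
      sums (pi^2 / 6 - (\<Sum>m\<le>M. 1 / (real m)^2))"
    by (intro sums_diff inverse_squares_sums_nat sums_If_finite_set) simp
  then have w: "w sums (pi^2 / 6 - (\<Sum>m\<le>M. 1 / (real m)^2))"
    unfolding w_def[abs_def] by (simp add: if_distrib cong: if_cong)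
  have "v m \<le> u m + w m" for m
  proof (cases "2 \<le> m \<and> m \<le> M")
    case True
    then obtain p where "prime p" "p dvd m"
      using prime_factor_nat[of m] by auto
    then have "p \<in> primes_le M \<inter> prime_factors m"
      using True dvd_imp_le[of p m] by (auto simp: primes_le_def in_prime_factors_iff)
    then show ?thesis
      by (auto simp: v_def u_def w_def)
  qed (auto simp: v_def u_def w_def not_le le_Suc_eq)
  then show "pi^2 / 6 * (\<Prod>p\<in>primes_le M. 1 - 1 / (real p)^2) \<le> 1 + (pi^2 / 6 - (\<Sum>m\<le>M. 1 / (real m)^2))"
    using sums_le[OF _ v sums_add[OF u w]] by blast
  have "u m \<le> v m" for m
    by (auto simp: u_def v_def)
  then show "1 \<le> pi^2 / 6 * (\<Prod>p\<in>primes_le M. 1 - 1 / (real p)^2)"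
    using sums_le[OF _ u v] by blast
qed

lemma euler_prod_inverse_squares_LIMSEQ:
  "(\<lambda>M. \<Prod>p\<in>primes_le M. 1 - 1 / (real p)^2) \<longlonglongrightarrow> 6 / pi^2"
proof -
  have "(\<lambda>M. \<Sum>m\<le>M. 1 / (real m)^2) \<longlonglongrightarrow> pi^2 / 6"
    using inverse_squares_sums_nat by (simp add: sums_def_le)
  then have "(\<lambda>M. 1 + (pi^2 / 6 - (\<Sum>m\<le>M. 1 / (real m)^2))) \<longlonglongrightarrow> 1 + (pi^2 / 6 - pi^2 / 6)"
    by (intro tendsto_intros)
  then have upper: "(\<lambda>M. 1 + (pi^2 / 6 - (\<Sum>m\<le>M. 1 / (real m)^2))) \<longlonglongrightarrow> 1"
    by simp
  have "(\<lambda>M. pi^2 / 6 * (\<Prod>p\<in>primes_le M. 1 - 1 / (real p)^2)) \<longlonglongrightarrow> 1"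
  proof (rule tendsto_sandwich[OF _ _ tendsto_const upper])
    show "\<forall>\<^sub>F M in sequentially. 1 \<le> pi^2 / 6 * (\<Prod>p\<in>primes_le M. 1 - 1 / (real p)^2)"
      by (intro always_eventually allI euler_prod_inverse_squares_bounds(1))
    show "\<forall>\<^sub>F M in sequentially. pi^2 / 6 * (\<Prod>p\<in>primes_le M. 1 - 1 / (real p)^2)
        \<le> 1 + (pi^2 / 6 - (\<Sum>m\<le>M. 1 / (real m)^2))"
      by (intro always_eventually allI euler_prod_inverse_squares_bounds(2))
  qed
  from tendsto_mult[OF tendsto_const[of "6 / pi^2"] this] show ?thesis
    by simp
qed

lemma prime_inverse_square_factor_bounds:
  fixes p :: nat
  assumes "prime p"
  shows "0 < 1 - 1 / (real p)^2" "1 - 1 / (real p)^2 \<le> 1 - 1 / (real p * (real p + 1))"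
proof -
  have p: "2 \<le> real p"
    using prime_ge_2_nat[OF assms] by simp
  then have "1 < real p * real p"
    by (intro less_1_mult) auto
  then show "0 < 1 - 1 / (real p)^2"
    by (simp add: power2_eq_square)
  have "1 / (real p * (real p + 1)) \<le> 1 / (real p)^2"
    using p by (intro divide_left_mono) (auto simp: power2_eq_square)
  then show "1 - 1 / (real p)^2 \<le> 1 - 1 / (real p * (real p + 1))"
    by simp
qed

lemma sqfree_farey_const_eq: "sqfree_farey_const = pi^2 / 6 * pair_const"
proof -
  define f where "f p = (if prime p then 1 - 1 / (real p * (real p + 1)) else 1)" for p :: nat
  define E where "E M = (\<Prod>p\<in>primes_le M. 1 - 1 / (real p)^2)" for M
  define R where "R M = (\<Prod>p\<in>primes_le M. 1 - 1 / (real p * (real p + 1)))" for M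
  have partial: "(\<Prod>i\<le>M. f (i + 0)) = R M" for M
    unfolding f_def R_def primes_le_def by (simp add: prod.If_cases Int_def conj_commute)
  have E_pos: "E M > 0" for M
    unfolding E_def
    by (intro prod_pos ballI prime_inverse_square_factor_bounds(1)) (simp add: primes_le_def)
  have E_le_R: "E M \<le> R M" for M
    unfolding E_def R_def
    by (intro prod_mono ballI conjI less_imp_le prime_inverse_square_factor_bounds)
       (simp_all add: primes_le_def)
  have E_lim: "E \<longlonglongrightarrow> 6 / pi^2"
    unfolding E_def[abs_def] by (rule euler_prod_inverse_squares_LIMSEQ)
  have "(\<lambda>M. E M * R M) \<longlonglongrightarrow> pair_const"
    using euler_prod_LIMSEQ_pair_const by (simp add: E_def R_def prod.distrib)
  from tendsto_divide[OF this E_lim] have R_lim: "R \<longlonglongrightarrow> pair_const / (6 / pi^2)"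
    using E_pos by (simp add: less_imp_neq[symmetric])
  have "6 / pi^2 \<le> pair_const / (6 / pi^2)"
    using E_le_R by (intro LIMSEQ_le[OF E_lim R_lim]) auto
  moreover have "0 < 6 / pi^2"
    by simp
  ultimately have "pair_const / (6 / pi^2) \<noteq> 0"
    by linarith
  with R_lim partial have "f has_prod (pair_const / (6 / pi^2))"
    by (simp add: has_prod_def raw_has_prod_def)
  then have "sqfree_farey_const = pair_const / (6 / pi^2)"
    unfolding sqfree_farey_const_def f_def[abs_def] by (rule has_prod_unique[symmetric])
  then show ?thesis
    by simp
qed

section \<open>Counting the fractions\<close>

lemma inj_on_reduced_fraction:
  "inj_on (\<lambda>(q, a). (of_nat a / of_nat q :: rat)) {(q, a). 1 \<le> q \<and> coprime a q}"
proof (rule inj_onI, clarify)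
  fix q a q' a'
  assume "1 \<le> q" "coprime a q" "1 \<le> q'" "coprime a' q'"
    and eq: "(of_nat a / of_nat q :: rat) = of_nat a' / of_nat q'"
  moreover from this have e: "a * q' = a' * q"
    by (simp add: frac_eq_eq flip: of_nat_mult)
  ultimately have "q dvd q'" "q' dvd q"
    by (metis coprime_commute coprime_dvd_mult_right_iff dvd_triv_right)+
  then have "q = q'"
    by (rule dvd_antisym)
  then show "q = q' \<and> a = a'"
    using e \<open>1 \<le> q\<close> by simp
qed

lemma farey_sqfree_eq_image:
  "farey_sqfree Q = (\<lambda>(q, a). of_nat a / of_nat q) ` (SIGMA q:{q\<in>{1..Q}. squarefree q}. totatives q)"
proof (intro equalityI subsetI)
  fix x :: rat
  assume "x \<in> farey_sqfree Q"
  then obtain a q where "x = of_nat a / of_nat q" "0 < a" "a \<le> q" "q \<le> Q" "coprime a q" "squarefree q"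
    by (auto simp: farey_sqfree_def)
  then show "x \<in> (\<lambda>(q, a). of_nat a / of_nat q) ` (SIGMA q:{q\<in>{1..Q}. squarefree q}. totatives q)"
    by (auto simp: in_totatives_iff intro!: image_eqI[of _ _ "(q, a)"])
next
  fix x :: rat
  assume "x \<in> (\<lambda>(q, a). of_nat a / of_nat q) ` (SIGMA q:{q\<in>{1..Q}. squarefree q}. totatives q)"
  then obtain q a where x: "x = of_nat a / of_nat q" and "q \<in> {q\<in>{1..Q}. squarefree q}" "a \<in> totatives q"
    by auto
  then have "0 < a" "a \<le> q" "q \<le> Q" "coprime a q" "squarefree q"
    by (auto simp: in_totatives_iff)
  with x show "x \<in> farey_sqfree Q"
    unfolding farey_sqfree_def by blast
qed

lemma card_farey_sqfree: "real (card (farey_sqfree Q)) = sqfree_totient_sum Q"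
proof -
  define S where "S = (SIGMA q:{q\<in>{1..Q}. squarefree q}. totatives q)"
  have "inj_on (\<lambda>(q, a). (of_nat a / of_nat q :: rat)) S"
    by (rule inj_on_subset[OF inj_on_reduced_fraction]) (auto simp: S_def in_totatives_iff)
  then have "card (farey_sqfree Q) = card S"
    unfolding farey_sqfree_eq_image S_def[symmetric] by (rule card_image)
  also have "\<dots> = (\<Sum>q\<in>{q\<in>{1..Q}. squarefree q}. totient q)"
    unfolding S_def totient_def by (rule card_SigmaI) auto
  finally have "real (card (farey_sqfree Q)) = (\<Sum>q\<in>{q\<in>{1..Q}. squarefree q}. real (totient q))"
    by simp
  also have "\<dots> = sqfree_totient_sum Q"
    unfolding sqfree_totient_sum_def by (rule sum.inter_filter[OF finite_atLeastAtMost])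
  finally show ?thesis .
qed

lemma powr_three_halves:
  fixes x :: real
  assumes "0 \<le> x"
  shows "x powr (3/2) = x * sqrt x"
proof -
  have "x powr (3/2) = x powr 1 * x powr (1/2)"
    by (subst powr_add[symmetric]) simp
  then show ?thesis
    using assms by (simp add: powr_half_sqrt)
qed

theorem proposition1:
  shows "(\<lambda>Q::nat. real (card (farey_sqfree Q)) - 3 * (real Q)^2 / pi^2 * sqfree_farey_const)
           \<in> O(\<lambda>Q. real Q powr (3/2))"
proof (rule bigoI[where c = 6])
  have "\<bar>real (card (farey_sqfree Q)) - 3 * (real Q)^2 / pi^2 * sqfree_farey_const\<bar>
      \<le> 6 * (real Q powr (3/2))" if "Q \<ge> 1" for Q
  proof -
    have "3 * (real Q)^2 / pi^2 * sqfree_farey_const = (real Q)^2 / 2 * pair_const"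
      by (simp add: sqfree_farey_const_eq field_simps)
    moreover have "real Q powr (3/2) = real Q * sqrt (real Q)"
      by (simp add: powr_three_halves)
    ultimately show ?thesis
      using sqfree_totient_sum_approx[OF that] by (simp add: card_farey_sqfree)
  qed
  then show "\<forall>\<^sub>F Q in at_top. norm (real (card (farey_sqfree Q)) - 3 * (real Q)^2 / pi^2 * sqfree_farey_const)
      \<le> 6 * norm (real Q powr (3/2))"
    by (auto simp: eventually_at_top_linorder intro!: exI[of _ 1])
qed

end
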